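(* Let $k\ge4$ be an integer and $\eta\in[\pi/k,\eta_k)$. If $\arg z_{2k-3}\in(0,\eta]$, then $z_{2k-2}\in\triangle(0,z_0,1)$, $z_{2k-1}\in\triangle(0,z_1,z_0)$, $w_{2k-2}\in\triangle(1,w_0,a)$ and $w_{2k-1}\in\triangle(1,w_1,w_0)$. If $\arg z_{2k-3}\in(\eta,2\eta]$, then $z_{2k-2}\in\triangle(0,1,z_{2k-3})$, $z_{2k-1}\in\triangle(0,z_0,1)$, $w_{2k-2}\in\triangle(1,a,w_{2k-3})$ and $w_{2k-1}\in\triangle(1,w_0,a)$.
   Context: For $\eta\in(0,\pi/3)$ let $a=\frac{e^{-i\eta}}{2\cos\eta}$, $c=\frac{1}{1-|a|^4}$, and for integers $j\ge0$ put $z_j=ca^{j+1}$, $w_j=1-c|a|^2a^j$. $\arg$ takes values in $[0,2\pi)$ (under the hypotheses $\arg z_{2k-3}=2\pi-(2k-2)\eta\in(0,2\eta]$). For integers $k\ge1$ let $\Phi_k(\eta)=(1-|a|^4)\sin((k-1)\eta)-|a|^3\sin((k-2)\eta)+|a|^k\sin\eta$; for each $k\ge4$, $\Phi_k$ has a unique zero in $(\pi/k,\pi/(k-1))$, denoted $\eta_k$. $\triangle(u,v,w)$ is the closed solid triangle with vertices $u,v,w$. *)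

theory Defs
  imports "HOL-Analysis.Analysis"
begin

definition aa :: "real \<Rightarrow> complex" where
  "aa \<eta> = exp (- \<i> * complex_of_real \<eta>) / complex_of_real (2 * cos \<eta>)"

definition cc :: "real \<Rightarrow> real" where
  "cc \<eta> = 1 / (1 - cmod (aa \<eta>) ^ 4)"

definition zz :: "real \<Rightarrow> nat \<Rightarrow> complex" where
  "zz \<eta> j = complex_of_real (cc \<eta>) * aa \<eta> ^ (j + 1)"

definition ww :: "real \<Rightarrow> nat \<Rightarrow> complex" where
  "ww \<eta> j = 1 - complex_of_real (cc \<eta> * cmod (aa \<eta>) ^ 2) * aa \<eta> ^ j"

definition arg0 :: "complex \<Rightarrow> real" where
  "arg0 z = (if Arg z < 0 then Arg z + 2 * pi else Arg z)"

definition Phi :: "nat \<Rightarrow> real \<Rightarrow> real" where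
  "Phi k \<eta> = (1 - cmod (aa \<eta>) ^ 4) * sin ((real k - 1) * \<eta>)
      - cmod (aa \<eta>) ^ 3 * sin ((real k - 2) * \<eta>) + cmod (aa \<eta>) ^ k * sin \<eta>"

text \<open>The unique zero of Phi k in (pi/k, pi/(k-1)), for k >= 4.\<close>
definition eta_k :: "nat \<Rightarrow> real" where
  "eta_k k = (THE \<eta>. \<eta> \<in> {pi / real k <..< pi / (real k - 1)} \<and> Phi k \<eta> = 0)"

definition tri :: "complex \<Rightarrow> complex \<Rightarrow> complex \<Rightarrow> complex set" where
  "tri u v w = convex hull {u, v, w}"

end

theory Submission
  imports Defs
begin

(*
  Write r = |a| = 1 / (2 cos eta), so that a = r cis (-eta) and z_j = c r^(j+1) cis (-(j+1) eta),
  and let alpha = 2 pi - (2k-2) eta.  Then z_(2k-3) = c r^(2k-2) cis alpha with 0 < alpha <= 2 eta,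
  so alpha is the argument of z_(2k-3).  Membership of rho cis phi in a triangle with a vertex at 0
  is decided by its barycentric coordinates, which are quotients of sines; in this way the
  z-inclusions reduce to r^(2k-2) (1 + c r) <= 1 and, when alpha > eta, to
  c r^(2k-1) sin eta + r sin (alpha - eta) <= sin alpha.  The exception is z_(2k-1) in the first
  case, which equals a z_(2k-2) and so lies in a * tri(0, z_0, 1) = tri(0, z_1, a), a subset of
  tri(0, z_1, z_0).  The w-inclusions are the images of the z-inclusions under p |-> 1 - cnj a p,
  which maps 0, 1, z_j to 1, a, w_j.

  Both inequalities follow from crude estimates: for k >= 5 one has eta <= pi/4, hence r^2 <= 1/2;
  for k = 4 one has r^4 < 1/2, because Phi_4 vanishes exactly where cos^4 eta = 1/8.  For k >= 5 the
  hypothesis eta < eta_k is used only through eta_k < pi/(k-1), i.e. through the uniqueness of the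
  zero of Phi_k, which holds since Phi_k is strictly decreasing on [pi/k, pi/(k-1)].
*)

lemma tri_affine_image:
  fixes b m p u v w :: complex
  assumes "p \<in> tri u v w"
  shows "b + m * p \<in> tri (b + m * u) (b + m * v) (b + m * w)"
proof -
  have "(\<lambda>p. b + m * p) ` (convex hull {u, v, w}) = (\<lambda>p. b + p) ` ((*) m ` (convex hull {u, v, w}))"
    by (simp add: image_image)
  also have "\<dots> = convex hull {b + m * u, b + m * v, b + m * w}"
    by (simp add: convex_hull_linear_image[OF linear_times] flip: convex_hull_translation)
  finally show ?thesis
    using assms unfolding tri_def by blast
qed

lemma tri_subset_tri:
  "w' \<in> tri u v w \<Longrightarrow> tri u v w' \<subseteq> tri u v w"
  unfolding tri_def by (intro convex_hull_subset) (auto intro: hull_inc)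

lemma scaled_in_tri0:
  fixes t :: real
  assumes "0 \<le> t" "t \<le> 1"
  shows "of_real t * w \<in> tri 0 v w"
  unfolding tri_def convex_hull_3 using assms
  by (intro CollectI exI[of _ "1 - t"] exI[of _ 0] exI[of _ t]) (simp add: scaleR_conv_of_real)

text \<open>The barycentric coordinates of \<open>\<rho> cis \<phi>\<close> with respect to \<open>R1 cis t1\<close> and \<open>R2 cis t2\<close>
  are \<open>\<rho> sin (t2 - \<phi>) / (R1 sin (t2 - t1))\<close> and \<open>\<rho> sin (\<phi> - t1) / (R2 sin (t2 - t1))\<close>.\<close>

lemma polar_in_tri0:
  fixes \<rho> R1 R2 \<phi> t1 t2 :: real
  assumes "sin (t2 - t1) > 0" and "R1 > 0" "R2 > 0"
    and "0 \<le> \<rho> * sin (t2 - \<phi>)" "0 \<le> \<rho> * sin (\<phi> - t1)"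
    and "\<rho> * sin (t2 - \<phi>) / R1 + \<rho> * sin (\<phi> - t1) / R2 \<le> sin (t2 - t1)"
  shows "of_real \<rho> * cis \<phi> \<in> tri 0 (of_real R1 * cis t1) (of_real R2 * cis t2)"
proof -
  define d where "d = sin (t2 - t1)"
  define x where "x = \<rho> * sin (t2 - \<phi>) / (R1 * d)"
  define y where "y = \<rho> * sin (\<phi> - t1) / (R2 * d)"
  have "d > 0" using assms(1) d_def by simp
  moreover have "x + y = (\<rho> * sin (t2 - \<phi>) / R1 + \<rho> * sin (\<phi> - t1) / R2) / d"
    unfolding x_def y_def by (simp add: add_divide_distrib)
  ultimately have "0 \<le> x" "0 \<le> y" "x + y \<le> 1"
    using assms unfolding x_def y_def d_def by simp_all
  moreover have "of_real \<rho> * cis \<phi> = x *\<^sub>R (of_real R1 * cis t1) + y *\<^sub>R (of_real R2 * cis t2)"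
  proof -
    have "sin (t2 - \<phi>) * cos t1 + sin (\<phi> - t1) * cos t2 = d * cos \<phi>"
         "sin (t2 - \<phi>) * sin t1 + sin (\<phi> - t1) * sin t2 = d * sin \<phi>"
      unfolding d_def sin_diff by (simp_all add: algebra_simps)
    then show ?thesis
      using assms(2,3) \<open>d > 0\<close> unfolding x_def y_def
      by (simp add: complex_eq_iff field_simps) (metis distrib_left)
  qed
  ultimately show ?thesis
    unfolding tri_def convex_hull_3
    by (intro CollectI exI[of _ "1 - x - y"] exI[of _ x] exI[of _ y]) auto
qed

lemma polar_in_tri_sector:
  fixes \<rho> R \<eta> \<phi> :: real
  assumes "0 < \<eta>" "\<eta> \<le> pi / 2" "- \<eta> \<le> \<phi>" "\<phi> \<le> 0"
    and "0 \<le> \<rho>" "0 < R" "\<rho> * (1 + R) \<le> R"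
  shows "of_real \<rho> * cis \<phi> \<in> tri 0 (of_real R * cis (- \<eta>)) 1"
proof -
  have sin_le: "0 \<le> sin t \<and> sin t \<le> sin \<eta>" if "0 \<le> t" "t \<le> \<eta>" for t
    using that assms by (auto intro!: sin_ge_zero sin_monotone_2pi_le)
  have "\<rho> * sin (- \<phi>) \<le> \<rho> * sin \<eta>" "\<rho> * sin (\<phi> + \<eta>) \<le> \<rho> * sin \<eta>"
    using sin_le[of "- \<phi>"] sin_le[of "\<phi> + \<eta>"] assms by (intro mult_left_mono; simp)+
  then have "\<rho> * sin (0 - \<phi>) / R + \<rho> * sin (\<phi> - - \<eta>) / 1 \<le> \<rho> * sin \<eta> / R + \<rho> * sin \<eta>"
    using assms by (intro add_mono divide_right_mono) simp_all
  also have "\<dots> = sin \<eta> * (\<rho> * (1 + R) / R)"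
    using assms by (simp add: field_simps)
  also have "\<dots> \<le> sin \<eta>"
    using assms sin_le[of \<eta>] by (intro mult_right_le_one_le) (auto simp: field_simps)
  finally have "of_real \<rho> * cis \<phi> \<in> tri 0 (of_real R * cis (- \<eta>)) (of_real 1 * cis 0)"
    using assms sin_le[of "- \<phi>"] sin_le[of "\<phi> + \<eta>"]
    by (intro polar_in_tri0) (auto intro: sin_gt_zero mult_nonneg_nonpos)
  then show ?thesis
    by simp
qed

lemma cis_minus_2pi: "cis (\<theta> - 2 * pi) = cis \<theta>"
  by (metis cis_2pi cis_divide div_by_1)

lemma arg0_polar:
  assumes "0 < \<rho>" "0 \<le> \<theta>" "\<theta> < 2 * pi"
  shows "arg0 (of_real \<rho> * cis \<theta>) = \<theta>"
proof (cases "\<theta> \<le> pi")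
  case True
  then have "Arg (of_real \<rho> * cis \<theta>) = \<theta>"
    using assms by (intro Arg_unique'[of \<rho>]) (auto simp: rcis_def)
  then show ?thesis
    using assms unfolding arg0_def by simp
next
  case False
  have "Arg (of_real \<rho> * cis \<theta>) = \<theta> - 2 * pi"
    using assms False by (intro Arg_unique'[of \<rho>]) (auto simp: rcis_def cis_minus_2pi)
  then show ?thesis
    using assms unfolding arg0_def by simp
qed

definition rr :: "real \<Rightarrow> real" where
  "rr \<eta> = 1 / (2 * cos \<eta>)"

lemma aa_polar: "cos \<eta> > 0 \<Longrightarrow> aa \<eta> = of_real (rr \<eta>) * cis (- \<eta>)"
  unfolding aa_def rr_def cis_conv_exp by (simp add: field_simps)

lemma cmod_aa: "cos \<eta> > 0 \<Longrightarrow> cmod (aa \<eta>) = rr \<eta>"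
  by (simp add: aa_polar norm_mult norm_divide rr_def)

lemma cc_eq: "cos \<eta> > 0 \<Longrightarrow> cc \<eta> = 1 / (1 - rr \<eta> ^ 4)"
  by (simp add: cc_def cmod_aa)

lemma one_minus_cnj_aa: "cos \<eta> \<noteq> 0 \<Longrightarrow> 1 - cnj (aa \<eta>) = aa \<eta>"
  unfolding aa_def by (simp add: complex_eq_iff Re_exp Im_exp)

lemma zz_Suc: "zz \<eta> (Suc j) = aa \<eta> * zz \<eta> j"
  by (simp add: zz_def)

lemma ww_eq_zz: "ww \<eta> j = 1 - cnj (aa \<eta>) * zz \<eta> j"
  using complex_norm_square[of "aa \<eta>"] by (simp add: ww_def zz_def algebra_simps)

lemma ww_in_tri_of_zz_in_tri:
  "zz \<eta> j \<in> tri 0 u v \<Longrightarrow> ww \<eta> j \<in> tri 1 (1 - cnj (aa \<eta>) * u) (1 - cnj (aa \<eta>) * v)"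
  using tri_affine_image[of "zz \<eta> j" 0 u v 1 "- cnj (aa \<eta>)"] by (simp add: ww_eq_zz)

lemma zz_polar:
  assumes "cos \<eta> > 0"
  shows "zz \<eta> j = of_real (cc \<eta> * rr \<eta> ^ (j + 1)) * cis (- (real (j + 1) * \<eta>))"
  using assms unfolding zz_def aa_polar[OF assms]
  by (simp only: power_mult_distrib Complex.DeMoivre of_real_power of_real_mult mult_minus_right mult.assoc)

lemma zz_polar_wrapped:
  assumes "cos \<eta> > 0" "real (j + 1) * \<eta> + \<theta> = 2 * pi"
  shows "zz \<eta> j = of_real (cc \<eta> * rr \<eta> ^ (j + 1)) * cis \<theta>"
proof -
  have "- (real (j + 1) * \<eta>) = \<theta> - 2 * pi"
    using assms(2) by simp
  then show ?thesis
    using zz_polar[OF assms(1), of j] by (simp add: cis_minus_2pi)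
qed

lemma rr_cc_bounds:
  assumes "0 < \<eta>" "\<eta> < pi / 2" "rr \<eta> < 1"
  shows "cos \<eta> > 0" "0 < rr \<eta>" "1 \<le> cc \<eta>"
proof -
  show "cos \<eta> > 0"
    using assms by (intro cos_gt_zero_pi) auto
  then show "0 < rr \<eta>"
    by (simp add: rr_def)
  then have "rr \<eta> ^ 4 < 1"
    using assms(3) by (simp add: power_less_one_iff)
  then show "1 \<le> cc \<eta>"
    using \<open>0 < rr \<eta>\<close> by (simp add: cc_eq[OF \<open>cos \<eta> > 0\<close>])
qed

lemma zz_in_tri_sector:
  assumes "0 < \<eta>" "\<eta> < pi / 2" "rr \<eta> < 1" "- \<eta> \<le> \<theta>" "\<theta> \<le> 0"
    and "real (j + 1) * \<eta> + \<theta> = 2 * pi"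
    and "rr \<eta> ^ j * (1 + cc \<eta> * rr \<eta>) \<le> 1"
  shows "zz \<eta> j \<in> tri 0 (zz \<eta> 0) 1"
proof -
  define r c where "r = rr \<eta>" and "c = cc \<eta>"
  have cos: "cos \<eta> > 0" and r: "0 < r" and c: "1 \<le> c"
    using rr_cc_bounds[OF assms(1-3)] unfolding r_def c_def by auto
  have "of_real (c * r ^ (j + 1)) * cis \<theta> \<in> tri 0 (of_real (c * r) * cis (- \<eta>)) 1"
  proof (rule polar_in_tri_sector)
    have "c * r ^ (j + 1) * (1 + c * r) = (c * r) * (r ^ j * (1 + c * r))"
      by (simp add: algebra_simps)
    also have "\<dots> \<le> c * r"
      using assms(7) r c unfolding r_def c_def by (simp add: mult_left_le)
    finally show "c * r ^ (j + 1) * (1 + c * r) \<le> c * r" .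
  qed (use assms r c in auto)
  then show ?thesis
    using zz_polar[OF cos, of 0] zz_polar_wrapped[OF cos assms(6)] unfolding r_def c_def by simp
qed

lemma tail_in_tri_small_angle:
  assumes "0 < \<eta>" "\<eta> < pi / 2" "rr \<eta> < 1" "0 \<le> \<alpha>" "\<alpha> \<le> \<eta>"
    and "real (i + 1) * \<eta> + \<alpha> = 2 * pi"
    and "rr \<eta> ^ (i + 1) * (1 + cc \<eta> * rr \<eta>) \<le> 1"
  shows "zz \<eta> (Suc i) \<in> tri 0 (zz \<eta> 0) 1" "zz \<eta> (Suc (Suc i)) \<in> tri 0 (zz \<eta> 1) (zz \<eta> 0)"
    and "ww \<eta> (Suc i) \<in> tri 1 (ww \<eta> 0) (aa \<eta>)" "ww \<eta> (Suc (Suc i)) \<in> tri 1 (ww \<eta> 1) (ww \<eta> 0)"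
proof -
  have zi: "zz \<eta> (Suc i) \<in> tri 0 (zz \<eta> 0) 1"
    using assms by (intro zz_in_tri_sector[of _ "\<alpha> - \<eta>"]) (auto simp: algebra_simps)
  have "zz \<eta> (Suc (Suc i)) \<in> tri 0 (zz \<eta> 1) (aa \<eta>)"
    using tri_affine_image[OF zi, of 0 "aa \<eta>"] by (simp add: zz_Suc)
  also have "\<dots> \<subseteq> tri 0 (zz \<eta> 1) (zz \<eta> 0)"
  proof (rule tri_subset_tri)
    have c: "1 \<le> cc \<eta>"
      using rr_cc_bounds[OF assms(1-3)] by simp
    then have "of_real (1 / cc \<eta>) * zz \<eta> 0 \<in> tri 0 (zz \<eta> 1) (zz \<eta> 0)"
      by (intro scaled_in_tri0) auto
    moreover have "of_real (1 / cc \<eta>) * zz \<eta> 0 = aa \<eta>"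
      using c by (simp add: zz_def)
    ultimately show "aa \<eta> \<in> tri 0 (zz \<eta> 1) (zz \<eta> 0)"
      by simp
  qed
  finally have zii: "zz \<eta> (Suc (Suc i)) \<in> tri 0 (zz \<eta> 1) (zz \<eta> 0)" .
  have "cos \<eta> \<noteq> 0"
    using rr_cc_bounds[OF assms(1-3)] by simp
  then show "zz \<eta> (Suc i) \<in> tri 0 (zz \<eta> 0) 1" "zz \<eta> (Suc (Suc i)) \<in> tri 0 (zz \<eta> 1) (zz \<eta> 0)"
    "ww \<eta> (Suc i) \<in> tri 1 (ww \<eta> 0) (aa \<eta>)" "ww \<eta> (Suc (Suc i)) \<in> tri 1 (ww \<eta> 1) (ww \<eta> 0)"
    using zi zii ww_in_tri_of_zz_in_tri[OF zi] ww_in_tri_of_zz_in_tri[OF zii] by (simp_all add: one_minus_cnj_aa flip: ww_eq_zz)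
qed

lemma tail_in_tri_large_angle:
  assumes "0 < \<eta>" "\<eta> < pi / 2" "rr \<eta> < 1" "\<eta> < \<alpha>" "\<alpha> \<le> 2 * \<eta>"
    and "real (i + 1) * \<eta> + \<alpha> = 2 * pi"
    and "rr \<eta> ^ (i + 1) * (1 + cc \<eta> * rr \<eta>) \<le> 1"
    and "cc \<eta> * rr \<eta> ^ (i + 2) * sin \<eta> + rr \<eta> * sin (\<alpha> - \<eta>) \<le> sin \<alpha>"
  shows "zz \<eta> (Suc i) \<in> tri 0 1 (zz \<eta> i)" "zz \<eta> (Suc (Suc i)) \<in> tri 0 (zz \<eta> 0) 1"
    and "ww \<eta> (Suc i) \<in> tri 1 (aa \<eta>) (ww \<eta> i)" "ww \<eta> (Suc (Suc i)) \<in> tri 1 (ww \<eta> 0) (aa \<eta>)"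
proof -
  define r c where "r = rr \<eta>" and "c = cc \<eta>"
  have cos: "cos \<eta> > 0" and r: "0 < r" "r < 1" and c: "1 \<le> c"
    using rr_cc_bounds[OF assms(1-3)] assms(3) unfolding r_def c_def by auto
  have "of_real (c * r ^ (i + 2)) * cis (\<alpha> - \<eta>) \<in> tri 0 (of_real 1 * cis 0) (of_real (c * r ^ (i + 1)) * cis \<alpha>)"
  proof (rule polar_in_tri0)
    show "0 < sin (\<alpha> - 0)"
      using assms by (intro sin_gt_zero) auto
    have "c * r ^ (i + 2) * sin (\<alpha> - \<eta> - 0) / (c * r ^ (i + 1)) = r * sin (\<alpha> - \<eta>)"
      using r c by (simp add: field_simps)
    then show "c * r ^ (i + 2) * sin (\<alpha> - (\<alpha> - \<eta>)) / 1
        + c * r ^ (i + 2) * sin (\<alpha> - \<eta> - 0) / (c * r ^ (i + 1)) \<le> sin (\<alpha> - 0)"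
      using assms(8) unfolding r_def c_def by simp
  qed (use assms r c in \<open>auto intro!: mult_nonneg_nonneg sin_ge_zero\<close>)
  then have zi: "zz \<eta> (Suc i) \<in> tri 0 1 (zz \<eta> i)"
    using zz_polar_wrapped[OF cos assms(6)] zz_polar_wrapped[OF cos, of "Suc i" "\<alpha> - \<eta>"] assms(6)
    unfolding r_def c_def by (simp add: algebra_simps)
  have "r ^ (i + 2) * (1 + c * r) \<le> r ^ (i + 1) * (1 + c * r)"
    using r c by (intro mult_right_mono power_decreasing) auto
  then have zii: "zz \<eta> (Suc (Suc i)) \<in> tri 0 (zz \<eta> 0) 1"
    using assms r_def c_def by (intro zz_in_tri_sector[of _ "\<alpha> - 2 * \<eta>"]) (auto simp: algebra_simps)
  show "zz \<eta> (Suc i) \<in> tri 0 1 (zz \<eta> i)" "zz \<eta> (Suc (Suc i)) \<in> tri 0 (zz \<eta> 0) 1"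
    "ww \<eta> (Suc i) \<in> tri 1 (aa \<eta>) (ww \<eta> i)" "ww \<eta> (Suc (Suc i)) \<in> tri 1 (ww \<eta> 0) (aa \<eta>)"
    using zi zii ww_in_tri_of_zz_in_tri[OF zi] ww_in_tri_of_zz_in_tri[OF zii] cos by (simp_all add: one_minus_cnj_aa flip: ww_eq_zz)
qed

lemma rr_has_real_derivative:
  "cos x \<noteq> 0 \<Longrightarrow> (rr has_real_derivative 2 * sin x * rr x ^ 2) (at x)"
  unfolding rr_def
  by (rule derivative_eq_intros refl | simp)+ (simp add: field_simps power2_eq_square)

lemma rr_bounds_first_octant:
  assumes "0 < x" "x \<le> pi / 4"
  shows "0 < rr x" "rr x * cos x = 1 / 2" "rr x \<le> cos x" "rr x ^ 2 \<le> 1 / 2" "sin x ^ 2 \<le> 1 / 2"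
    and "rr x < 1"
proof -
  have "cos (pi / 4) \<le> cos x"
    using assms by (intro cos_monotone_0_pi_le) auto
  then have cos2: "1 / 2 \<le> cos x ^ 2"
    using power_mono[of "sqrt 2 / 2" "cos x" 2] by (auto simp: cos_45 power_divide)
  have "0 < cos x"
    using assms by (intro cos_gt_zero_pi) auto
  then show "0 < rr x" "rr x * cos x = 1 / 2"
    by (simp_all add: rr_def)
  show "rr x \<le> cos x" "rr x ^ 2 \<le> 1 / 2"
    using cos2 \<open>0 < cos x\<close> by (simp_all add: rr_def field_simps power2_eq_square)
  show "sin x ^ 2 \<le> 1 / 2"
    using cos2 sin_cos_squared_add[of x] by linarith
  show "rr x < 1"
    using \<open>rr x ^ 2 \<le> 1 / 2\<close> \<open>0 < rr x\<close> abs_square_less_1[of "rr x"] by simp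
qed

lemma first_octant_interval:
  assumes "5 \<le> k"
  shows "0 < pi / real k" "pi / real k < pi / (real k - 1)" "pi / (real k - 1) \<le> pi / 4"
proof -
  show "0 < pi / real k"
    using assms by simp
  show "pi / real k < pi / (real k - 1)" "pi / (real k - 1) \<le> pi / 4"
    using assms by (intro divide_strict_left_mono divide_left_mono; simp)+
qed

lemma sin_cos_multiple_bounds:
  assumes "2 \<le> k" "pi / real k \<le> x" "x \<le> pi / (real k - 1)"
  shows "0 \<le> sin ((real k - 1) * x)" "cos ((real k - 1) * x) \<le> - cos x"
proof -
  define y where "y = pi - (real k - 1) * x"
  have "(real k - 1) * x \<le> pi" "pi - pi / real k \<le> (real k - 1) * x"
    using assms mult_left_mono[OF assms(3), of "real k - 1"] mult_left_mono[OF assms(2), of "real k - 1"]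
    by (auto simp: field_simps)
  moreover have "pi / real k \<le> x" "0 < pi / real k" "x \<le> pi"
    using assms order_trans[OF assms(3), of pi] by (auto simp: field_simps)
  ultimately have "0 \<le> y" "y \<le> x" "x \<le> pi"
    unfolding y_def by (auto simp: field_simps)
  moreover have "sin ((real k - 1) * x) = sin y" "cos ((real k - 1) * x) = - cos y"
    unfolding y_def by simp_all
  ultimately show "0 \<le> sin ((real k - 1) * x)" "cos ((real k - 1) * x) \<le> - cos x"
    by (auto intro!: sin_ge_zero cos_monotone_0_pi_le)
qed

text \<open>\<open>Phi\<close> rewritten with \<open>rr x * cos x = 1 / 2\<close> and the addition formula for
  \<open>sin ((k - 2) x)\<close>; in this form its derivative is easy to bound.\<close>

definition Psi :: "nat \<Rightarrow> real \<Rightarrow> real" where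
  "Psi k x = (1 - rr x ^ 4 - rr x ^ 2 / 2) * sin ((real k - 1) * x)
      + rr x ^ 3 * sin x * cos ((real k - 1) * x) + rr x ^ k * sin x"

lemma Phi_eq_Psi:
  assumes "cos x > 0"
  shows "Phi k x = Psi k x"
proof -
  have "(real k - 2) * x = (real k - 1) * x - x"
    by (simp add: algebra_simps)
  then have "rr x ^ 3 * sin ((real k - 2) * x)
      = rr x ^ 2 * (rr x * cos x) * sin ((real k - 1) * x) - rr x ^ 3 * sin x * cos ((real k - 1) * x)"
    by (simp only: sin_diff) (simp add: algebra_simps power2_eq_square power3_eq_cube)
  moreover have "rr x * cos x = 1 / 2"
    using assms by (simp add: rr_def)
  ultimately show ?thesis
    using assms by (simp add: Phi_def Psi_def cmod_aa algebra_simps)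
qed

lemma Psi_has_real_derivative:
  fixes k :: nat and x :: real
  defines r_def: "r \<equiv> rr x" and s_def: "s \<equiv> sin x"
    and S_def: "S \<equiv> sin ((real k - 1) * x)" and C_def: "C \<equiv> cos ((real k - 1) * x)"
  assumes "cos x \<noteq> 0"
  shows "(Psi k has_real_derivative
      - (4 * r ^ 3 + r) * (2 * s * r ^ 2) * S + (1 - r ^ 4 - r ^ 2 / 2) * (real k - 1) * C
      + (3 * r ^ 2 * (2 * s * r ^ 2) * s + r ^ 3 * cos x) * C - r ^ 3 * s * (real k - 1) * S
      + 2 * real k * r ^ (k + 1) * s ^ 2 + r ^ k * cos x) (at x)"
proof -
  have rr': "((\<lambda>x. rr x) has_real_derivative 2 * sin x * rr x ^ 2) (at x)"
    using rr_has_real_derivative[OF assms(5)] by simp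
  show ?thesis
    unfolding Psi_def[abs_def] r_def s_def S_def C_def
    by (rule derivative_eq_intros rr' refl | simp)+ (cases k; simp add: algebra_simps eval_nat_numeral)
qed

lemma power_le_half_power:
  fixes r :: real
  assumes "0 \<le> r" "r ^ 2 \<le> 1 / 2" "2 * j \<le> n"
  shows "r ^ n \<le> (1 / 2) ^ j"
proof -
  have "r \<le> 1"
    using assms(1,2) abs_square_le_1[of r] by simp
  then have "r ^ n \<le> r ^ (2 * j)"
    using assms by (intro power_decreasing) auto
  also have "\<dots> \<le> (1 / 2) ^ j"
    unfolding power_mult using assms by (intro power_mono) auto
  finally show ?thesis .
qed

text \<open>After multiplying by \<open>r\<close>, the term with \<open>(k - 1) C\<close> contributes at most \<open>-(k - 1) / 4\<close>,
  the last two terms at most \<open>(k + 1) / 8\<close>, and all other terms are nonpositive.\<close>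

lemma Psi_derivative_neg:
  fixes r s co S C :: real
  assumes k: "5 \<le> k" and r: "0 < r" "r * co = 1 / 2" "r ^ 2 \<le> 1 / 2"
    and s: "0 < s" "s ^ 2 \<le> 1 / 2" and SC: "0 \<le> S" "C \<le> - co"
  shows "- (4 * r ^ 3 + r) * (2 * s * r ^ 2) * S + (1 - r ^ 4 - r ^ 2 / 2) * (real k - 1) * C
      + (3 * r ^ 2 * (2 * s * r ^ 2) * s + r ^ 3 * co) * C - r ^ 3 * s * (real k - 1) * S
      + 2 * real k * r ^ (k + 1) * s ^ 2 + r ^ k * co < 0"
    (is "?D < 0")
proof -
  have "0 < co"
    using r(1,2) by (metis zero_less_divide_1_iff zero_less_mult_pos zero_less_numeral)
  have "r ^ 4 \<le> (1 / 2) ^ 2" "r ^ k \<le> (1 / 2) ^ 2" "r ^ (k + 2) \<le> (1 / 2) ^ 3"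
    using r k by (intro power_le_half_power; simp)+
  then have r4: "r ^ 4 \<le> 1 / 4" and rk: "r ^ k \<le> 1 / 4" and rk2: "r ^ (k + 2) \<le> 1 / 8"
    by (simp_all add: power_divide)
  have "0 \<le> r * ((4 * r ^ 3 + r) * (2 * s * r ^ 2) * S)" "0 \<le> r * (r ^ 3 * s * (real k - 1) * S)"
    using r(1) s(1) SC(1) k by simp_all
  moreover have "r * ((3 * r ^ 2 * (2 * s * r ^ 2) * s + r ^ 3 * co) * C) \<le> 0"
    using r s SC \<open>0 < co\<close> by (intro mult_nonneg_nonpos) auto
  moreover have "r * ((1 - r ^ 4 - r ^ 2 / 2) * (real k - 1) * C) \<le> - (real k - 1) / 4"
  proof -
    have "1 / 2 \<le> 1 - r ^ 4 - r ^ 2 / 2"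
      using r r4 by simp
    then have "(1 / 2) * (real k - 1) * (r * co) \<le> (1 - r ^ 4 - r ^ 2 / 2) * (real k - 1) * (r * - C)"
      using r SC k \<open>0 < co\<close> by (intro mult_mono) auto
    moreover have "(1 / 2) * (real k - 1) * (r * co) = (real k - 1) / 4"
      unfolding r(2) by simp
    moreover have "(1 - r ^ 4 - r ^ 2 / 2) * (real k - 1) * (r * - C)
        = - (r * ((1 - r ^ 4 - r ^ 2 / 2) * (real k - 1) * C))"
      by (simp add: field_simps)
    ultimately show ?thesis
      by linarith
  qed
  moreover have "r * (2 * real k * r ^ (k + 1) * s ^ 2 + r ^ k * co) \<le> (real k + 1) / 8"
  proof -
    have "r * (2 * real k * r ^ (k + 1) * s ^ 2 + r ^ k * co) = 2 * real k * r ^ (k + 2) * s ^ 2 + r ^ k / 2"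
      using r by (simp add: algebra_simps)
    also have "\<dots> \<le> 2 * real k * (1 / 8) * (1 / 2) + (1 / 4) / 2"
      using r(1) s rk rk2 by (intro add_mono mult_mono divide_right_mono) auto
    finally show ?thesis
      by (simp add: field_simps)
  qed
  moreover have "r * ?D = - (r * ((4 * r ^ 3 + r) * (2 * s * r ^ 2) * S))
      + r * ((1 - r ^ 4 - r ^ 2 / 2) * (real k - 1) * C)
      + r * ((3 * r ^ 2 * (2 * s * r ^ 2) * s + r ^ 3 * co) * C)
      - r * (r ^ 3 * s * (real k - 1) * S) + r * (2 * real k * r ^ (k + 1) * s ^ 2 + r ^ k * co)"
    by (simp only: distrib_left right_diff_distrib mult_minus_right)
  ultimately have "r * ?D \<le> - (real k - 1) / 4 + (real k + 1) / 8"
    by linarith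
  also have "\<dots> < 0"
    using k by (simp add: field_simps)
  finally show ?thesis
    using r(1) by (simp add: mult_less_0_iff)
qed

lemma Psi_strict_decreasing:
  assumes "5 \<le> k" "pi / real k \<le> a" "a < b" "b \<le> pi / (real k - 1)"
  shows "Psi k b < Psi k a"
proof (rule DERIV_neg_imp_decreasing[OF assms(3)])
  fix x assume x: "a \<le> x" "x \<le> b"
  then have "0 < x" "x \<le> pi / 4"
    using first_octant_interval[OF assms(1)] assms by linarith+
  note r = rr_bounds_first_octant[OF this]
  have "cos x \<noteq> 0" "0 < sin x"
    using r \<open>0 < x\<close> \<open>x \<le> pi / 4\<close> by (auto intro!: sin_gt_zero)
  moreover have "0 \<le> sin ((real k - 1) * x)" "cos ((real k - 1) * x) \<le> - cos x"
    using sin_cos_multiple_bounds[of k x] assms x by auto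
  ultimately show "\<exists>D. (Psi k has_real_derivative D) (at x) \<and> D < 0"
    using Psi_has_real_derivative Psi_derivative_neg[OF assms(1) r(1,2,4) _ r(5)] by blast
qed

lemma Psi_left_end_pos:
  assumes "5 \<le> k"
  shows "0 < Psi k (pi / real k)"
proof -
  define x where "x = pi / real k"
  have "0 < x" "x \<le> pi / 4"
    unfolding x_def using first_octant_interval[OF assms] by linarith+
  note r = rr_bounds_first_octant[OF this]
  have "(real k - 1) * x = pi - x"
    unfolding x_def using assms by (simp add: field_simps)
  then have "Psi k x = sin x * (1 - rr x ^ 4 - rr x ^ 2 / 2 - rr x ^ 2 * (rr x * cos x) + rr x ^ k)"
    unfolding Psi_def by (simp add: algebra_simps power2_eq_square power3_eq_cube)
  also have "\<dots> = sin x * (1 - (rr x ^ 2) ^ 2 - rr x ^ 2 + rr x ^ k)"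
    unfolding r(2) by simp
  also have "\<dots> > 0"
  proof (rule mult_pos_pos)
    show "0 < sin x"
      using \<open>0 < x\<close> \<open>x \<le> pi / 4\<close> by (intro sin_gt_zero) auto
    have "(rr x ^ 2) ^ 2 \<le> (1 / 2) ^ 2"
      using r(4) by (intro power_mono) auto
    moreover have "0 \<le> rr x ^ k"
      using r(1) by simp
    ultimately show "0 < 1 - (rr x ^ 2) ^ 2 - rr x ^ 2 + rr x ^ k"
      using r(4) by (simp add: power_divide)
  qed
  finally show ?thesis
    unfolding x_def .
qed

lemma Psi_right_end_neg:
  assumes "5 \<le> k"
  shows "Psi k (pi / (real k - 1)) < 0"
proof -
  define x where "x = pi / (real k - 1)"
  have "0 < x" "x \<le> pi / 4"
    unfolding x_def using first_octant_interval[OF assms] by linarith+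
  note r = rr_bounds_first_octant[OF this]
  have "(real k - 1) * x = pi"
    unfolding x_def using assms by (simp add: field_simps)
  then have "Psi k x = sin x * (rr x ^ k - rr x ^ 3)"
    unfolding Psi_def by (simp add: algebra_simps)
  also have "\<dots> < 0"
    using \<open>0 < x\<close> \<open>x \<le> pi / 4\<close> r(1) r(6) assms
    by (intro mult_pos_neg sin_gt_zero) (auto intro!: power_strict_decreasing)
  finally show ?thesis
    unfolding x_def .
qed

lemma ex1_zero_of_strict_decreasing:
  fixes f :: "real \<Rightarrow> real"
  assumes "a \<le> b" "continuous_on {a..b} f" "0 < f a" "f b < 0"
    and "\<And>x y. a \<le> x \<Longrightarrow> x < y \<Longrightarrow> y \<le> b \<Longrightarrow> f y < f x"
  shows "\<exists>!x. x \<in> {a<..<b} \<and> f x = 0"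
proof -
  obtain x where x: "a \<le> x" "x \<le> b" "f x = 0"
    using IVT2'[of f b 0 a] assms by auto
  then have "x \<in> {a<..<b}"
    using assms by (cases "x = a"; cases "x = b") auto
  moreover have "y = x" if "y \<in> {a<..<b}" "f y = 0" for y
    using assms(5)[of x y] assms(5)[of y x] x that by (cases x y rule: linorder_cases) auto
  ultimately show ?thesis
    using x by blast
qed

lemma Phi_ex1_zero_ge5:
  assumes "5 \<le> k"
  shows "\<exists>!\<eta>. \<eta> \<in> {pi / real k <..< pi / (real k - 1)} \<and> Phi k \<eta> = 0"
proof -
  define a b where "a = pi / real k" and "b = pi / (real k - 1)"
  have "0 < a" "a \<le> b" "b \<le> pi / 4"
    unfolding a_def b_def using first_octant_interval[OF assms] by simp_all
  then have cos: "cos x > 0" if "a \<le> x" "x \<le> b" for x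
    using that by (intro cos_gt_zero_pi) auto
  have "\<exists>!\<eta>. \<eta> \<in> {a<..<b} \<and> Psi k \<eta> = 0"
  proof (rule ex1_zero_of_strict_decreasing)
    show "continuous_on {a..b} (Psi k)"
    proof (intro continuous_at_imp_continuous_on ballI)
      fix x assume "x \<in> {a..b}"
      then have "cos x \<noteq> 0"
        using cos by fastforce
      then show "isCont (Psi k) x"
        by (rule DERIV_isCont[OF Psi_has_real_derivative])
    qed
  qed (use assms \<open>a \<le> b\<close> in \<open>auto simp: a_def b_def Psi_left_end_pos Psi_right_end_neg Psi_strict_decreasing\<close>)
  moreover have "Phi k \<eta> = Psi k \<eta>" if "\<eta> \<in> {a<..<b}" for \<eta>
    using that cos by (intro Phi_eq_Psi) auto
  ultimately show ?thesis
    unfolding a_def b_def by (metis (no_types, lifting))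
qed

lemma Phi4_eq:
  assumes "cos x > 0"
  shows "Phi 4 x = sin x * (1 - rr x ^ 2) * (1 - 2 * rr x ^ 4) / rr x ^ 2"
proof -
  have "sin (3 * x) = sin (2 * x + x)"
    by simp
  also have "\<dots> = sin x * (4 * cos x ^ 2 - 1)"
    by (simp only: sin_add sin_double cos_double_cos) (simp add: algebra_simps power2_eq_square)
  finally have "sin (3 * x) = sin x * (4 * cos x ^ 2 - 1)" .
  moreover have "(real 4 - 1) * x = 3 * x" "(real 4 - 2) * x = 2 * x"
    by simp_all
  ultimately have "Phi 4 x = (1 - rr x ^ 4) * (sin x * (4 * cos x ^ 2 - 1))
      - rr x ^ 3 * (2 * sin x * cos x) + rr x ^ 4 * sin x"
    unfolding Phi_def cmod_aa[OF assms] by (simp add: sin_double)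
  also have "\<dots> = sin x * (1 - rr x ^ 2) * (1 - 2 * rr x ^ 4) / rr x ^ 2"
    unfolding rr_def using assms
    by (simp add: field_simps power2_eq_square) (simp add: algebra_simps flip: power_Suc)
  finally show ?thesis .
qed

lemma Phi4_eq_0_iff:
  assumes "pi / 4 < x" "x < pi / 3"
  shows "Phi 4 x = 0 \<longleftrightarrow> cos x ^ 4 = 1 / 8"
proof -
  have "cos (pi / 3) < cos x"
    using assms by (intro cos_monotone_0_pi) auto
  then have "1 / 2 < cos x"
    by (simp add: cos_60)
  then have r: "0 < rr x" "rr x < 1"
    by (simp_all add: rr_def)
  have "sin x > 0"
    using assms by (intro sin_gt_zero) auto
  moreover have "rr x ^ 2 < 1"
    using r by (simp add: power_less_one_iff)
  ultimately have "Phi 4 x = 0 \<longleftrightarrow> rr x ^ 4 = 1 / 2"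
    using Phi4_eq[of x] r \<open>1 / 2 < cos x\<close> by auto
  also have "\<dots> \<longleftrightarrow> cos x ^ 4 = 1 / 8"
    using \<open>1 / 2 < cos x\<close> by (simp add: rr_def power_divide field_simps)
  finally show ?thesis .
qed

lemma cos_pow4_strict_decreasing:
  assumes "0 \<le> x" "x < y" "y < pi / 2"
  shows "cos y ^ 4 < cos x ^ 4"
  using assms by (intro power_strict_mono cos_monotone_0_pi cos_ge_zero) auto

lemma Phi4_ex1_zero:
  "\<exists>!\<eta>. \<eta> \<in> {pi / real 4 <..< pi / (real 4 - 1)} \<and> Phi 4 \<eta> = 0"
proof -
  have "\<exists>!\<eta>. \<eta> \<in> {pi / 4 <..< pi / 3} \<and> cos \<eta> ^ 4 - 1 / 8 = 0"
  proof (rule ex1_zero_of_strict_decreasing)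
    show "0 < cos (pi / 4) ^ 4 - 1 / 8"
      by (simp add: cos_45 power_divide eval_nat_numeral)
    show "cos (pi / 3) ^ 4 - 1 / 8 < 0"
      by (simp add: cos_60 power_divide)
    show "cos y ^ 4 - 1 / 8 < cos x ^ 4 - 1 / 8" if "pi / 4 \<le> x" "x < y" "y \<le> pi / 3" for x y
      using cos_pow4_strict_decreasing[of x y] that pi_gt_zero by linarith
  qed (auto intro!: continuous_intros)
  then show ?thesis
    using Phi4_eq_0_iff by (simp cong: conj_cong)
qed

lemma eta_k_bounds:
  assumes "4 \<le> k"
  shows "pi / real k < eta_k k" "eta_k k < pi / (real k - 1)" "Phi k (eta_k k) = 0"
proof -
  have "\<exists>!\<eta>. \<eta> \<in> {pi / real k <..< pi / (real k - 1)} \<and> Phi k \<eta> = 0"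
    using assms Phi4_ex1_zero Phi_ex1_zero_ge5 by (cases "k = 4") auto
  from theI'[OF this] show "pi / real k < eta_k k" "eta_k k < pi / (real k - 1)" "Phi k (eta_k k) = 0"
    unfolding eta_k_def by auto
qed

lemma rr_pow4_lt_half:
  assumes "pi / 4 \<le> \<eta>" "\<eta> < eta_k 4"
  shows "rr \<eta> ^ 4 < 1 / 2"
proof -
  have e: "pi / 4 < eta_k 4" "eta_k 4 < pi / 3" "Phi 4 (eta_k 4) = 0"
    using eta_k_bounds[of 4] by simp_all
  then have "cos (eta_k 4) ^ 4 = 1 / 8"
    using Phi4_eq_0_iff by blast
  moreover have "cos (eta_k 4) ^ 4 < cos \<eta> ^ 4"
    using assms e by (intro cos_pow4_strict_decreasing) auto
  ultimately have "1 < 8 * cos \<eta> ^ 4"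
    by linarith
  then show ?thesis
    by (simp add: rr_def power_divide divide_less_eq)
qed

lemma tail_bounds_first_octant:
  assumes "0 < \<eta>" "\<eta> \<le> pi / 4" "8 \<le> m"
  shows "rr \<eta> ^ m * (1 + cc \<eta> * rr \<eta>) \<le> 1"
    and "\<eta> < \<alpha> \<Longrightarrow> \<alpha> \<le> 2 * \<eta> \<Longrightarrow> cc \<eta> * rr \<eta> ^ (m + 1) * sin \<eta> + rr \<eta> * sin (\<alpha> - \<eta>) \<le> sin \<alpha>"
proof -
  define r c where "r = rr \<eta>" and "c = cc \<eta>"
  note rb = rr_bounds_first_octant[OF assms(1,2), folded r_def]
  have "0 < cos \<eta>"
    using rb by linarith
  have "r ^ 4 \<le> (1 / 2) ^ 2" "r ^ m \<le> (1 / 2) ^ 4"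
    using rb assms(3) by (intro power_le_half_power; simp)+
  then have r4: "r ^ 4 \<le> 1 / 4" and rm: "r ^ m \<le> 1 / 16"
    by (simp_all add: power_divide)
  then have c: "1 \<le> c" "c \<le> 4 / 3"
    using rb(1) unfolding c_def r_def cc_eq[OF \<open>0 < cos \<eta>\<close>] by (simp_all add: field_simps)
  have "c * r \<le> 4 / 3"
    using c rb mult_left_le[of r c] by linarith
  then have "r ^ m * (1 + c * r) \<le> (1 / 16) * (1 + 4 / 3)"
    using rm rb c by (intro mult_mono add_left_mono) auto
  then show "rr \<eta> ^ m * (1 + cc \<eta> * rr \<eta>) \<le> 1"
    unfolding r_def c_def by simp
  assume \<alpha>: "\<eta> < \<alpha>" "\<alpha> \<le> 2 * \<eta>"
  have "c * r ^ m \<le> (4 / 3) * (1 / 16)"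
    using c rm rb(1) by (intro mult_mono) auto
  then have "c * r ^ (m + 1) \<le> r"
    using rb(1) mult_right_mono[of "c * r ^ m" 1 r] by (simp add: algebra_simps)
  moreover have "cos \<eta> \<le> cos (\<alpha> - \<eta>)"
    using \<alpha> assms by (intro cos_monotone_0_pi_le) auto
  moreover have "0 \<le> sin \<eta>" "0 \<le> sin (\<alpha> - \<eta>)"
    using \<alpha> assms by (auto intro!: sin_ge_zero)
  ultimately have "c * r ^ (m + 1) * sin \<eta> + r * sin (\<alpha> - \<eta>) \<le> cos (\<alpha> - \<eta>) * sin \<eta> + cos \<eta> * sin (\<alpha> - \<eta>)"
    using rb(3) by (intro add_mono mult_right_mono) auto
  also have "\<dots> = sin \<alpha>"
    using sin_add[of "\<alpha> - \<eta>" \<eta>] by (simp add: algebra_simps)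
  finally show "cc \<eta> * rr \<eta> ^ (m + 1) * sin \<eta> + rr \<eta> * sin (\<alpha> - \<eta>) \<le> sin \<alpha>"
    unfolding r_def c_def .
qed

lemma rr_cc_bounds_k4:
  assumes "cos \<eta> > 0" "rr \<eta> ^ 4 < 1 / 2"
  shows "0 < rr \<eta>" "rr \<eta> < 841 / 1000" "cc \<eta> * rr \<eta> ^ 7 \<le> 595 / 1000"
    and "rr \<eta> ^ 6 * (1 + cc \<eta> * rr \<eta>) \<le> 1"
proof -
  define r c where "r = rr \<eta>" and "c = cc \<eta>"
  show "0 < rr \<eta>"
    using assms(1) by (simp add: rr_def)
  then have "0 < r"
    by (simp add: r_def)
  show "rr \<eta> < 841 / 1000"
  proof (rule ccontr)
    assume "\<not> rr \<eta> < 841 / 1000"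
    then have "(841 / 1000) ^ 4 \<le> rr \<eta> ^ 4"
      by (intro power_mono) auto
    moreover have "1 / 2 < (841 / 1000 :: real) ^ 4"
      by (simp add: power_divide)
    ultimately show False
      using assms(2) by linarith
  qed
  then have "r ^ 2 \<le> (841 / 1000) ^ 2" "r ^ 3 \<le> (841 / 1000) ^ 3"
    using \<open>0 < r\<close> unfolding r_def by (intro power_mono; simp)+
  then have r2: "r ^ 2 \<le> 7073 / 10000" and r3: "r ^ 3 \<le> 595 / 1000"
    by (simp_all add: power_divide)
  have "c * r ^ 4 \<le> 1"
    using assms(2) \<open>0 < r\<close> unfolding c_def r_def cc_eq[OF assms(1)] by (simp add: field_simps)
  then have "c * r ^ 7 \<le> 595 / 1000"
    using mult_right_mono[of "c * r ^ 4" 1 "r ^ 3"] \<open>0 < r\<close> r3 by (simp add: power_add[symmetric] mult.assoc)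
  then show "cc \<eta> * rr \<eta> ^ 7 \<le> 595 / 1000"
    by (simp add: r_def c_def)
  have "r ^ 4 * r ^ 2 \<le> (1 / 2) * (7073 / 10000)"
    using assms(2) r2 \<open>0 < r\<close> unfolding r_def by (intro mult_mono) auto
  then show "rr \<eta> ^ 6 * (1 + cc \<eta> * rr \<eta>) \<le> 1"
    using \<open>c * r ^ 7 \<le> 595 / 1000\<close> unfolding r_def c_def by (simp add: algebra_simps flip: power_Suc)
qed

lemma sin_mult_sin_le:
  assumes "pi / 4 \<le> \<eta>" "7 * \<eta> \<le> 2 * pi"
  shows "sin (2 * pi - 7 * \<eta>) * sin (2 * \<eta> - pi / 2) \<le> 441 / 10000"
proof -
  define g t where "g = 2 * pi - 7 * \<eta>" and "t = 2 * \<eta> - pi / 2"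
  have "0 \<le> g" "0 \<le> t" "t \<le> pi"
    using assms pi_gt_zero unfolding g_def t_def by auto
  then have "sin g * sin t \<le> g * t"
    by (intro mult_mono sin_x_le_x sin_ge_zero) auto
  also have "g * t = pi ^ 2 / 224 - 14 * (\<eta> - pi / 4 - pi / 56) ^ 2"
    unfolding g_def t_def by (simp add: power2_eq_square algebra_simps)
  also have "\<dots> \<le> pi ^ 2 / 224"
    by simp
  also have "\<dots> \<le> 441 / 10000"
    using power_mono[OF pi_approx(2), of 2] by (simp add: power_divide)
  finally show ?thesis
    unfolding g_def t_def .
qed

lemma cos_minus_rr: "cos \<eta> \<noteq> 0 \<Longrightarrow> cos \<eta> - rr \<eta> = rr \<eta> * cos (2 * \<eta>)"
  unfolding cos_double_cos rr_def by (simp add: field_simps power2_eq_square)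

lemma tail_bound_k4:
  assumes "pi / 4 \<le> \<eta>" "\<eta> < 2 * pi - 6 * \<eta>" "rr \<eta> ^ 4 < 1 / 2"
  shows "cc \<eta> * rr \<eta> ^ 7 * sin \<eta> + rr \<eta> * sin (2 * pi - 6 * \<eta> - \<eta>) \<le> sin (2 * pi - 6 * \<eta>)"
proof -
  define r c g t where "r = rr \<eta>" and "c = cc \<eta>" and "g = 2 * pi - 7 * \<eta>" and "t = 2 * \<eta> - pi / 2"
  have g: "0 < g" "g \<le> pi / 4" and t: "0 \<le> t" "t \<le> pi"
    using assms pi_gt_zero unfolding g_def t_def by auto
  have "0 < cos \<eta>"
    using assms pi_gt_zero by (intro cos_gt_zero_pi) linarith+
  note rc = rr_cc_bounds_k4[OF this assms(3), folded r_def c_def]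
  \<comment> \<open>The difference of the two sides is \<open>sin g (cos \<eta> - r) + sin \<eta> (cos g - c r\<^sup>7)\<close>,
    whose first summand is negative but small.\<close>
  have "sin g * (cos \<eta> - r) = - (r * (sin g * sin t))"
    using cos_minus_rr[of \<eta>] \<open>0 < cos \<eta>\<close> unfolding r_def t_def by (simp add: sin_diff)
  moreover have "r * (sin g * sin t) \<le> 441 / 10000"
  proof -
    have "r * (sin g * sin t) \<le> sin g * sin t"
      using rc(1,2) g t by (intro mult_left_le_one_le mult_nonneg_nonneg sin_ge_zero) auto
    also have "\<dots> \<le> 441 / 10000"
      using sin_mult_sin_le[of \<eta>] assms unfolding g_def t_def by simp
    finally show ?thesis .
  qed
  moreover have "147 / 2000 \<le> sin \<eta> * (cos g - c * r ^ 7)"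
  proof -
    have "sqrt 2 / 2 \<le> sin \<eta>" "sqrt 2 / 2 \<le> cos g"
      using assms g sin_monotone_2pi_le[of "pi / 4" \<eta>] cos_monotone_0_pi_le[of g "pi / 4"]
      by (auto simp: sin_45 cos_45)
    moreover have "7 / 5 \<le> sqrt 2"
      by (rule real_le_rsqrt) (simp add: power2_eq_square)
    ultimately have "7 / 10 \<le> sin \<eta>" "7 / 10 - 595 / 1000 \<le> cos g - c * r ^ 7"
      using rc(3) by linarith+
    then have "(7 / 10) * (7 / 10 - 595 / 1000) \<le> sin \<eta> * (cos g - c * r ^ 7)"
      by (intro mult_mono) auto
    then show ?thesis
      by simp
  qed
  moreover have "sin (2 * pi - 6 * \<eta>) - (c * r ^ 7 * sin \<eta> + r * sin (2 * pi - 6 * \<eta> - \<eta>))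
      = sin g * (cos \<eta> - r) + sin \<eta> * (cos g - c * r ^ 7)"
    using sin_add[of g \<eta>] unfolding g_def by (simp add: algebra_simps)
  ultimately show ?thesis
    unfolding r_def c_def by linarith
qed

lemma tail_angle_bounds:
  assumes "2 \<le> k" "pi / real k \<le> \<eta>" "\<eta> < pi / (real k - 1)"
  shows "0 < 2 * pi - (2 * real k - 2) * \<eta>" "2 * pi - (2 * real k - 2) * \<eta> \<le> 2 * \<eta>"
proof -
  have k: "2 \<le> real k"
    using assms(1) by simp
  have "(2 * real k - 2) * \<eta> < (2 * real k - 2) * (pi / (real k - 1))"
    using assms(3) k by (intro mult_strict_left_mono) auto
  also have "\<dots> = 2 * pi"
    using k by (simp add: field_simps)
  finally show "0 < 2 * pi - (2 * real k - 2) * \<eta>"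
    by simp
  have "pi \<le> real k * \<eta>"
    using assms(2) k by (simp add: field_simps)
  then show "2 * pi - (2 * real k - 2) * \<eta> \<le> 2 * \<eta>"
    by (simp add: algebra_simps)
qed

lemma tail_bounds:
  assumes "4 \<le> k" "pi / real k \<le> \<eta>" "\<eta> < eta_k k"
  defines "\<alpha> \<equiv> 2 * pi - (2 * real k - 2) * \<eta>"
  shows "0 < \<eta>" "\<eta> < pi / 2" "rr \<eta> < 1" "0 < \<alpha>" "\<alpha> \<le> 2 * \<eta>"
    and "rr \<eta> ^ (2 * k - 2) * (1 + cc \<eta> * rr \<eta>) \<le> 1"
    and "\<eta> < \<alpha> \<Longrightarrow> cc \<eta> * rr \<eta> ^ (2 * k - 1) * sin \<eta> + rr \<eta> * sin (\<alpha> - \<eta>) \<le> sin \<alpha>"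
proof -
  have "\<eta> < pi / (real k - 1)"
    using assms eta_k_bounds(2)[OF assms(1)] by linarith
  then show "0 < \<alpha>" and \<alpha>: "\<alpha> \<le> 2 * \<eta>"
    using tail_angle_bounds[of k \<eta>] assms unfolding \<alpha>_def by auto
  have "0 < pi / real k"
    using assms(1) by simp
  then show "0 < \<eta>"
    using assms(2) by linarith
  have "\<eta> < pi / 3 \<and> rr \<eta> < 1 \<and> rr \<eta> ^ (2 * k - 2) * (1 + cc \<eta> * rr \<eta>) \<le> 1 \<and>
    (\<eta> < \<alpha> \<longrightarrow> cc \<eta> * rr \<eta> ^ (2 * k - 1) * sin \<eta> + rr \<eta> * sin (\<alpha> - \<eta>) \<le> sin \<alpha>)"
  proof (cases "k = 4")
    case True
    then have "pi / 4 \<le> \<eta>" "\<eta> < pi / 3" "rr \<eta> ^ 4 < 1 / 2"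
      using assms eta_k_bounds(2)[of 4] rr_pow4_lt_half by auto
    moreover have "0 < cos \<eta>"
      using \<open>0 < \<eta>\<close> \<open>\<eta> < pi / 3\<close> by (intro cos_gt_zero_pi) auto
    moreover have "\<alpha> = 2 * pi - 6 * \<eta>" "2 * k - 2 = 6" "2 * k - 1 = 7"
      using True unfolding \<alpha>_def by auto
    ultimately show ?thesis
      using rr_cc_bounds_k4[of \<eta>] tail_bound_k4[of \<eta>] by auto
  next
    case False
    then have "5 \<le> k"
      using assms(1) by simp
    then have "\<eta> \<le> pi / 4"
      using first_octant_interval(3)[of k] \<open>\<eta> < pi / (real k - 1)\<close> by linarith
    moreover have "\<eta> < pi / 3"
      using \<open>\<eta> \<le> pi / 4\<close> pi_gt_zero by linarith
    moreover have "8 \<le> 2 * k - 2" "2 * k - 2 + 1 = 2 * k - 1"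
      using \<open>5 \<le> k\<close> by auto
    ultimately show ?thesis
      using tail_bounds_first_octant[OF \<open>0 < \<eta>\<close> \<open>\<eta> \<le> pi / 4\<close>, of "2 * k - 2"]
        rr_bounds_first_octant(6)[OF \<open>0 < \<eta>\<close> \<open>\<eta> \<le> pi / 4\<close>] \<alpha>
      by auto
  qed
  then show "\<eta> < pi / 2" "rr \<eta> < 1" "rr \<eta> ^ (2 * k - 2) * (1 + cc \<eta> * rr \<eta>) \<le> 1"
    "\<eta> < \<alpha> \<Longrightarrow> cc \<eta> * rr \<eta> ^ (2 * k - 1) * sin \<eta> + rr \<eta> * sin (\<alpha> - \<eta>) \<le> sin \<alpha>"
    using \<open>0 < \<eta>\<close> by auto
qed

theorem lemma6p4:
  fixes k :: nat and \<eta> :: real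
  assumes "k \<ge> 4"
    and "pi / real k \<le> \<eta>" and "\<eta> < eta_k k"
  shows "(arg0 (zz \<eta> (2*k-3)) \<in> {0<..\<eta>} \<longrightarrow>
            zz \<eta> (2*k-2) \<in> tri 0 (zz \<eta> 0) 1 \<and>
            zz \<eta> (2*k-1) \<in> tri 0 (zz \<eta> 1) (zz \<eta> 0) \<and>
            ww \<eta> (2*k-2) \<in> tri 1 (ww \<eta> 0) (aa \<eta>) \<and>
            ww \<eta> (2*k-1) \<in> tri 1 (ww \<eta> 1) (ww \<eta> 0))
       \<and> (arg0 (zz \<eta> (2*k-3)) \<in> {\<eta><..2*\<eta>} \<longrightarrow>
            zz \<eta> (2*k-2) \<in> tri 0 1 (zz \<eta> (2*k-3)) \<and>
            zz \<eta> (2*k-1) \<in> tri 0 (zz \<eta> 0) 1 \<and>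
            ww \<eta> (2*k-2) \<in> tri 1 (aa \<eta>) (ww \<eta> (2*k-3)) \<and>
            ww \<eta> (2*k-1) \<in> tri 1 (ww \<eta> 0) (aa \<eta>))"
proof -
  define \<alpha> where "\<alpha> = 2 * pi - (2 * real k - 2) * \<eta>"
  note bounds = tail_bounds[OF assms, folded \<alpha>_def]
  define i where "i = 2 * k - 3"
  have idx: "2 * k - 2 = Suc i" "2 * k - 1 = Suc (Suc i)" "i + 1 = 2 * k - 2" "i + 2 = 2 * k - 1"
    and wrap: "real (i + 1) * \<eta> + \<alpha> = 2 * pi"
    using assms(1) unfolding i_def \<alpha>_def by auto
  have Q1: "rr \<eta> ^ (i + 1) * (1 + cc \<eta> * rr \<eta>) \<le> 1"
    and Q2: "\<eta> < \<alpha> \<Longrightarrow> cc \<eta> * rr \<eta> ^ (i + 2) * sin \<eta> + rr \<eta> * sin (\<alpha> - \<eta>) \<le> sin \<alpha>"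
    using bounds(6,7) unfolding idx(3,4) by auto
  have "arg0 (zz \<eta> i) = \<alpha>"
    using bounds rr_cc_bounds[OF bounds(1-3)]
    unfolding zz_polar_wrapped[OF rr_cc_bounds(1)[OF bounds(1-3)] wrap] by (intro arg0_polar) auto
  then show ?thesis
    using tail_in_tri_small_angle[OF bounds(1-3) _ _ wrap Q1] tail_in_tri_large_angle[OF bounds(1-3) _ bounds(5) wrap Q1 Q2]
      bounds(4)
    unfolding idx(1,2) i_def[symmetric] by auto
qed

end
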